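(* For every $q\ge 2$, every $n\ge1$ and every $\delta\ge 0$, one has $|\tilde{\mathbb G}^q_{n,\delta}|=2^{\delta}\,|\mathbb G^q_{n,\delta}|$. Equivalently, $\tilde{\mathcal G}_\delta(z)=2^\delta\mathcal G_\delta(z)$, where $\tilde{\mathcal G}_\delta(z)=\sum_n|\tilde{\mathbb G}^q_{n,\delta}|z^n$ and $\mathcal G_\delta(z)=\sum_n|\mathbb G^q_{n,\delta}|z^n$.
   Context: Fix an integer $q\ge 2$. A $(q+1)$-edge-colored graph (colored graph) is a finite connected graph, multiple edges allowed and no loops, whose edges carry colors in $\{0,1,\dots,q\}$ such that every vertex is incident to exactly one edge of each color. It is rooted if one color-0 edge is distinguished and oriented; it is bipartite if its vertices can be colored black and white so that every edge joins a black and a white vertex, with the convention that the origin of the root edge is black. $\tilde{\mathbb G}^q$ denotes the set of rooted colored graphs and $\mathbb G^q\subset\tilde{\mathbb G}^q$ the set of bipartite ones. For $i\in\{1,\dots,q\}$, a color-$0i$ cycle of $G$ is a connected component of the subgraph formed by the edges of colors $0$ and $i$; $F_0(G)$ is the total number of color-$0i$ cycles over all $i\in\{1,\dots,q\}$. The order of $G$ is $\delta_0(G)=1+\frac{q-1}{2}V(G)-F_0(G)$, where $V(G)$ is the number of vertices. $\mathbb G^q_{n,\delta}$ (resp. $\tilde{\mathbb G}^q_{n,\delta}$) is the set of graphs in $\mathbb G^q$ (resp. $\tilde{\mathbb G}^q$) with $2n$ vertices and order $\delta$. *)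

theory Defs
  imports Main
begin

text \<open>A (q+1)-edge-colored graph on the vertex set {0..<V} is encoded by its colour
classes: for each colour c \<le> q the edges of colour c form a perfect matching,
i.e. a fixed-point-free involution \<sigma> c of {0..<V} (no loops; parallel edges of
different colours are allowed).  Outside the vertex set and for colours > q the
maps are the identity, so that the encoding is unique.\<close>

definition perfect_matching :: "nat \<Rightarrow> (nat \<Rightarrow> nat) \<Rightarrow> bool" where
  "perfect_matching V f \<longleftrightarrow>
     (\<forall>x<V. f x < V \<and> f x \<noteq> x \<and> f (f x) = x) \<and> (\<forall>x. V \<le> x \<longrightarrow> f x = x)"

definition cg_edges :: "nat \<Rightarrow> nat \<Rightarrow> (nat \<Rightarrow> nat \<Rightarrow> nat) \<Rightarrow> (nat \<times> nat) set" where
  "cg_edges q V \<sigma> = {(x, \<sigma> c x) | x c. x < V \<and> c \<le> q}"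

definition cg_connected :: "nat \<Rightarrow> nat \<Rightarrow> (nat \<Rightarrow> nat \<Rightarrow> nat) \<Rightarrow> bool" where
  "cg_connected q V \<sigma> \<longleftrightarrow> (\<forall>x<V. \<forall>y<V. (x, y) \<in> (cg_edges q V \<sigma>)\<^sup>*)"

definition colored_graph :: "nat \<Rightarrow> nat \<Rightarrow> (nat \<Rightarrow> nat \<Rightarrow> nat) \<Rightarrow> bool" where
  "colored_graph q V \<sigma> \<longleftrightarrow>
     0 < V \<and> (\<forall>c\<le>q. perfect_matching V (\<sigma> c)) \<and> (\<forall>c. q < c \<longrightarrow> \<sigma> c = id) \<and>
     cg_connected q V \<sigma>"

definition cg_bipartite :: "nat \<Rightarrow> nat \<Rightarrow> (nat \<Rightarrow> nat \<Rightarrow> nat) \<Rightarrow> bool" where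
  "cg_bipartite q V \<sigma> \<longleftrightarrow> (\<exists>black :: nat \<Rightarrow> bool. \<forall>c\<le>q. \<forall>x<V. black (\<sigma> c x) \<noteq> black x)"

definition bicoloured_cycles :: "nat \<Rightarrow> (nat \<Rightarrow> nat \<Rightarrow> nat) \<Rightarrow> nat \<Rightarrow> nat" where
  "bicoloured_cycles V \<sigma> i =
     card ({0..<V} // ({(x, \<sigma> 0 x) | x. x < V} \<union> {(x, \<sigma> i x) | x. x < V})\<^sup>*)"

definition F0 :: "nat \<Rightarrow> nat \<Rightarrow> (nat \<Rightarrow> nat \<Rightarrow> nat) \<Rightarrow> nat" where
  "F0 q V \<sigma> = (\<Sum>i = 1..q. bicoloured_cycles V \<sigma> i)"

text \<open>Order \<delta>_0 = 1 + (q-1)/2 V - F_0 (V is even for colored graphs, so the division is exact).\<close>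
definition cg_order :: "nat \<Rightarrow> nat \<Rightarrow> (nat \<Rightarrow> nat \<Rightarrow> nat) \<Rightarrow> int" where
  "cg_order q V \<sigma> = 1 + ((int q - 1) * int V) div 2 - int (F0 q V \<sigma>)"

text \<open>Rooted graphs: the root is the oriented colour-0 edge from r to \<sigma> 0 r,
determined by its origin r.  Rooted graphs are considered up to colour- and
root-preserving isomorphism.\<close>
definition rooted_iso :: "nat \<Rightarrow> nat \<Rightarrow> ((nat \<Rightarrow> nat \<Rightarrow> nat) \<times> nat) \<Rightarrow> ((nat \<Rightarrow> nat \<Rightarrow> nat) \<times> nat) \<Rightarrow> bool" where
  "rooted_iso q V g h \<longleftrightarrow>
     (\<exists>\<pi>. bij_betw \<pi> {0..<V} {0..<V} \<and> \<pi> (snd g) = snd h \<and>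
          (\<forall>c\<le>q. \<forall>x<V. \<pi> (fst g c x) = fst h c (\<pi> x)))"

definition labelled_rooted :: "nat \<Rightarrow> nat \<Rightarrow> int \<Rightarrow> bool \<Rightarrow> ((nat \<Rightarrow> nat \<Rightarrow> nat) \<times> nat) set" where
  "labelled_rooted q n \<delta> bip =
     {(\<sigma>, r). colored_graph q (2*n) \<sigma> \<and> r < 2*n \<and> cg_order q (2*n) \<sigma> = \<delta> \<and>
              (bip \<longrightarrow> cg_bipartite q (2*n) \<sigma>)}"

definition iso_classes :: "nat \<Rightarrow> nat \<Rightarrow> int \<Rightarrow> bool \<Rightarrow> ((nat \<Rightarrow> nat \<Rightarrow> nat) \<times> nat) set set" where
  "iso_classes q n \<delta> bip =
     labelled_rooted q n \<delta> bip //
       {(g, h). g \<in> labelled_rooted q n \<delta> bip \<and> h \<in> labelled_rooted q n \<delta> bip \<and> rooted_iso q (2*n) g h}"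

definition num_rooted :: "nat \<Rightarrow> nat \<Rightarrow> int \<Rightarrow> nat" where
  "num_rooted q n \<delta> = card (iso_classes q n \<delta> False)"

definition num_bipartite :: "nat \<Rightarrow> nat \<Rightarrow> int \<Rightarrow> nat" where
  "num_bipartite q n \<delta> = card (iso_classes q n \<delta> True)"

end

theory Submission
  imports Defs "HOL-Library.FuncSet" "HOL-Combinatorics.Permutations"
begin

text \<open>Every rooted isomorphism class contains exactly \<open>(2n)!\<close> labelled rooted graphs, since a
  relabelling fixing the root of a connected coloured graph fixes every vertex; so it suffices to
  compare labelled counts. There we double count pairs of a graph and 2-colourings of its vertices.
  The common proper colourings of the colour-0 and colour-\<open>i\<close> matchings are determined by a
  choice on each colour-0i cycle, so choosing one for every \<open>i\<close> gives \<open>2^F\<^sub>0\<close> families per graph.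
  Conjugating colour \<open>i\<close> by the swap of colour-0 edges that carries the chosen colouring to a fixed
  canonical colouring of the colour-0 matching keeps all colour-0i cycles and turns these pairs
  bijectively into pairs of a graph properly coloured by the canonical colouring and an arbitrary
  family, \<open>2^(nq)\<close> per graph. Doing the same with one colouring shared by all colours counts each
  bipartite graph twice. Since \<open>F\<^sub>0 = 1 + (q - 1) n - \<delta>\<close> for graphs of order \<open>\<delta>\<close>, comparing
  the two counts yields the factor \<open>2^\<delta>\<close>.\<close>

section \<open>Perfect matchings and their proper colourings\<close>

lemma perfect_matchingD:
  assumes "perfect_matching V f"
  shows "x < V \<Longrightarrow> f x < V" "x < V \<Longrightarrow> f x \<noteq> x" "f (f x) = x" "V \<le> x \<Longrightarrow> f x = x"
  using assms unfolding perfect_matching_def by (cases "x < V"; auto)+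

lemma perfect_matching_eq_iff:
  assumes "perfect_matching V f"
  shows "f a = b \<longleftrightarrow> a = f b"
  using perfect_matchingD(3)[OF assms] by metis

lemma perfect_matching_permutes:
  assumes "perfect_matching V f"
  shows "f permutes {0..<V}"
proof (rule bij_imp_permutes)
  show "bij_betw f {0..<V} {0..<V}"
    by (rule bij_betw_byWitness[where f' = f]) (auto simp: perfect_matchingD[OF assms])
qed (simp add: perfect_matchingD(4)[OF assms])

text \<open>A 2-colouring is represented by its set of black vertices.\<close>
definition proper_colouring :: "nat \<Rightarrow> (nat \<Rightarrow> nat) \<Rightarrow> nat set \<Rightarrow> bool" where
  "proper_colouring V f Y \<longleftrightarrow> Y \<subseteq> {0..<V} \<and> (\<forall>x<V. x \<in> Y \<longleftrightarrow> f x \<notin> Y)"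

lemma proper_colouringD:
  assumes "proper_colouring V f Y"
  shows "Y \<subseteq> {0..<V}" "x < V \<Longrightarrow> x \<in> Y \<longleftrightarrow> f x \<notin> Y"
  using assms unfolding proper_colouring_def by auto

definition canonical_colouring :: "nat \<Rightarrow> (nat \<Rightarrow> nat) \<Rightarrow> nat set" where
  "canonical_colouring V m = {x. x < V \<and> x < m x}"

lemma proper_colouring_canonical:
  assumes "perfect_matching V m"
  shows "proper_colouring V m (canonical_colouring V m)"
proof -
  note m = perfect_matchingD[OF assms]
  have "x < m x \<longleftrightarrow> \<not> m x < m (m x)" if "x < V" for x
    using m(2)[OF that] m(3)[of x] by auto
  then show ?thesis unfolding proper_colouring_def canonical_colouring_def using m(1) by auto
qed

definition matching_rel :: "nat \<Rightarrow> (nat \<Rightarrow> nat) set \<Rightarrow> (nat \<times> nat) set" where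
  "matching_rel V F = {(x, f x) | x f. x < V \<and> f \<in> F}"

lemma matching_rel_subset:
  assumes "\<forall>f\<in>F. perfect_matching V f"
  shows "matching_rel V F \<subseteq> {0..<V} \<times> {0..<V}"
proof
  fix p assume "p \<in> matching_rel V F"
  then obtain x f where "p = (x, f x)" "x < V" "f \<in> F" unfolding matching_rel_def by blast
  with assms show "p \<in> {0..<V} \<times> {0..<V}" by (simp add: perfect_matchingD(1))
qed

lemma sym_matching_rel:
  assumes "\<forall>f\<in>F. perfect_matching V f"
  shows "sym (matching_rel V F)"
proof (rule symI)
  fix x y assume "(x, y) \<in> matching_rel V F"
  then obtain f where f: "f \<in> F" "x < V" "y = f x" unfolding matching_rel_def by blast
  have "perfect_matching V f" using assms f(1) by blast
  then have "y < V" "f y = x" using f(2,3) by (simp_all add: perfect_matchingD)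
  with f(1) show "(y, x) \<in> matching_rel V F" unfolding matching_rel_def by blast
qed

lemma Image_matching_rel_subset_iff:
  "matching_rel V F `` D \<subseteq> D \<longleftrightarrow> (\<forall>f\<in>F. \<forall>x<V. x \<in> D \<longrightarrow> f x \<in> D)"
  unfolding matching_rel_def by blast

lemma bicoloured_cycles_eq:
  "bicoloured_cycles V \<sigma> i = card ({0..<V} // (matching_rel V {\<sigma> 0, \<sigma> i})\<^sup>*)"
proof -
  have "{(x, \<sigma> 0 x) | x. x < V} \<union> {(x, \<sigma> i x) | x. x < V} = matching_rel V {\<sigma> 0, \<sigma> i}"
    unfolding matching_rel_def by auto
  then show ?thesis unfolding bicoloured_cycles_def by simp
qed

lemma cg_edges_eq: "cg_edges q V \<sigma> = matching_rel V (\<sigma> ` {..q})"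
  unfolding cg_edges_def matching_rel_def by auto

section \<open>Counting saturated sets\<close>

lemma card_saturated_subsets:
  assumes E: "equiv A E" and "finite A"
  shows "card {D. D \<subseteq> A \<and> E `` D \<subseteq> D} = 2 ^ card (A // E)"
proof -
  have bij: "bij_betw Union (Pow (A // E)) {D. D \<subseteq> A \<and> E `` D \<subseteq> D}"
  proof (rule bij_betw_byWitness[where f' = "\<lambda>D. {C \<in> A // E. C \<subseteq> D}"])
    show "\<forall>K\<in>Pow (A // E). {C \<in> A // E. C \<subseteq> \<Union>K} = K"
    proof (intro ballI set_eqI iffI)
      fix K C assume K: "K \<in> Pow (A // E)" and "C \<in> {C \<in> A // E. C \<subseteq> \<Union>K}"
      then have C: "C \<in> A // E" "C \<subseteq> \<Union>K" by auto
      then obtain x where "x \<in> C" using in_quotient_imp_non_empty[OF E] by blast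
      then obtain C' where "C' \<in> K" "x \<in> C'" using C by blast
      then show "C \<in> K" using quotient_disj[OF E C(1), of C'] K \<open>x \<in> C\<close> by blast
    qed auto
    show "\<forall>D\<in>{D. D \<subseteq> A \<and> E `` D \<subseteq> D}. \<Union>{C \<in> A // E. C \<subseteq> D} = D"
    proof (intro ballI equalityI subsetI)
      fix D x assume D: "D \<in> {D. D \<subseteq> A \<and> E `` D \<subseteq> D}" and "x \<in> D"
      then have "x \<in> A" by blast
      have "E `` {x} \<in> A // E" using \<open>x \<in> A\<close> by (rule quotientI)
      moreover have "E `` {x} \<subseteq> D" using D \<open>x \<in> D\<close> by blast
      moreover have "x \<in> E `` {x}" using equiv_class_self[OF E \<open>x \<in> A\<close>] .
      ultimately show "x \<in> \<Union>{C \<in> A // E. C \<subseteq> D}" by blast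
    qed blast
    show "Union ` Pow (A // E) \<subseteq> {D. D \<subseteq> A \<and> E `` D \<subseteq> D}"
    proof safe
      fix K x C assume "K \<subseteq> A // E" "x \<in> C" "C \<in> K"
      then show "x \<in> A" using in_quotient_imp_subset[OF E] by blast
    next
      fix K x y C assume K: "K \<subseteq> A // E" and "(x, y) \<in> E" "x \<in> C" "C \<in> K"
      then have "y \<in> C" using in_quotient_imp_closed[OF E] by blast
      with \<open>C \<in> K\<close> show "y \<in> \<Union>K" by blast
    qed
  qed auto
  have "finite (A // E)"
    using finite_quotient[OF \<open>finite A\<close>] E by (simp add: equiv_type)
  then show ?thesis
    using bij_betw_same_card[OF bij] by (simp add: card_Pow)
qed

lemma rtrancl_closed:
  assumes "R \<subseteq> A \<times> A" "(x, y) \<in> R\<^sup>*" "x \<in> A"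
  shows "y \<in> A"
  using assms(2,3) by induction (use assms(1) in auto)

lemma equiv_rtrancl_restrict:
  assumes "R \<subseteq> A \<times> A" "sym R"
  shows "equiv A (R\<^sup>* \<inter> A \<times> A)"
  using sym_rtrancl[OF assms(2)]
  by (intro equivI refl_onI symI transI) (auto dest: symD intro: rtrancl_trans)

lemma quotient_rtrancl_restrict:
  assumes "R \<subseteq> A \<times> A"
  shows "A // (R\<^sup>* \<inter> A \<times> A) = A // R\<^sup>*"
proof -
  have "(R\<^sup>* \<inter> A \<times> A) `` {x} = R\<^sup>* `` {x}" if "x \<in> A" for x
    using rtrancl_closed[OF assms _ that] that by blast
  then show ?thesis unfolding quotient_def by blast
qed

lemma card_saturated_subsets_rtrancl:
  assumes "finite A" "R \<subseteq> A \<times> A" "sym R"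
  shows "card {D. D \<subseteq> A \<and> R `` D \<subseteq> D} = 2 ^ card (A // R\<^sup>*)"
proof -
  have "R \<subseteq> R\<^sup>* \<inter> A \<times> A" using assms(2) by auto
  then have "(R\<^sup>* \<inter> A \<times> A) `` D \<subseteq> D \<longleftrightarrow> R `` D \<subseteq> D" for D
    using Image_closed_trancl[of R D] by blast
  then have "{D. D \<subseteq> A \<and> R `` D \<subseteq> D} = {D. D \<subseteq> A \<and> (R\<^sup>* \<inter> A \<times> A) `` D \<subseteq> D}"
    by blast
  then show ?thesis
    using card_saturated_subsets[OF equiv_rtrancl_restrict[OF assms(2,3)] assms(1)]
    by (simp add: quotient_rtrancl_restrict[OF assms(2)])
qed

lemma card_quotient_rtrancl_uniform:
  assumes "finite A" "R \<subseteq> A \<times> A" "sym R" and k: "\<And>x. x \<in> A \<Longrightarrow> card (R\<^sup>* `` {x}) = k"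
  shows "k * card (A // R\<^sup>*) = card A"
proof -
  note E = equiv_rtrancl_restrict[OF assms(2,3)]
  have "k * card (A // R\<^sup>*) = card (\<Union>(A // R\<^sup>*))"
  proof (rule card_partition)
    show "finite (A // R\<^sup>*)"
      using finite_quotient[OF assms(1), of "R\<^sup>* \<inter> A \<times> A"] quotient_rtrancl_restrict[OF assms(2)]
      by auto
    show "finite (\<Union>(A // R\<^sup>*))"
      using Union_quotient[OF E] assms(1) by (simp add: quotient_rtrancl_restrict[OF assms(2)])
    show "card C = k" if "C \<in> A // R\<^sup>*" for C using k that by (auto elim: quotientE)
    show "C1 \<inter> C2 = {}" if "C1 \<in> A // R\<^sup>*" "C2 \<in> A // R\<^sup>*" "C1 \<noteq> C2" for C1 C2
      using quotient_disj[OF E, unfolded quotient_rtrancl_restrict[OF assms(2)]] that by blast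
  qed
  then show ?thesis
    using Union_quotient[OF E] by (simp add: quotient_rtrancl_restrict[OF assms(2)])
qed

section \<open>Common colourings of perfect matchings\<close>

text \<open>Two proper colourings of a matching differ on a set closed under the matching, so the
  common colourings of a family of matchings correspond to the sets saturated under all of them.\<close>

lemma proper_colouring_iff_closed_sym_diff:
  assumes f: "perfect_matching V f" and Y0: "proper_colouring V f Y0" and Y: "Y \<subseteq> {0..<V}"
  shows "proper_colouring V f Y \<longleftrightarrow> (\<forall>x<V. x \<in> sym_diff Y Y0 \<longrightarrow> f x \<in> sym_diff Y Y0)"
    (is "_ \<longleftrightarrow> (\<forall>x<V. x \<in> ?D \<longrightarrow> f x \<in> ?D)")
proof -
  have "(x \<in> Y \<longleftrightarrow> f x \<notin> Y) \<longleftrightarrow> (x \<in> ?D \<longleftrightarrow> f x \<in> ?D)" if "x < V" for x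
    using proper_colouringD(2)[OF Y0 that] by blast
  moreover have "(\<forall>x<V. x \<in> ?D \<longrightarrow> f x \<in> ?D) \<longleftrightarrow> (\<forall>x<V. x \<in> ?D \<longleftrightarrow> f x \<in> ?D)"
  proof
    assume closed: "\<forall>x<V. x \<in> ?D \<longrightarrow> f x \<in> ?D"
    show "\<forall>x<V. x \<in> ?D \<longleftrightarrow> f x \<in> ?D"
    proof (intro allI impI)
      fix x assume "x < V"
      then have "f x < V" "f (f x) = x" by (simp_all add: perfect_matchingD[OF f])
      then show "x \<in> ?D \<longleftrightarrow> f x \<in> ?D"
        using closed[rule_format, of x] closed[rule_format, of "f x"] \<open>x < V\<close> by auto
    qed
  qed simp
  ultimately show ?thesis using Y unfolding proper_colouring_def by blast
qed

lemma common_colouring_iff_saturated: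
  assumes F: "\<forall>f\<in>F. perfect_matching V f" and Y0: "\<forall>f\<in>F. proper_colouring V f Y0"
    and Y: "Y \<subseteq> {0..<V}"
  shows "(\<forall>f\<in>F. proper_colouring V f Y) \<longleftrightarrow> matching_rel V F `` sym_diff Y Y0 \<subseteq> sym_diff Y Y0"
proof -
  have "(\<forall>f\<in>F. proper_colouring V f Y) \<longleftrightarrow> (\<forall>f\<in>F. \<forall>x<V. x \<in> sym_diff Y Y0 \<longrightarrow> f x \<in> sym_diff Y Y0)"
  proof (rule ball_cong[OF refl])
    fix f assume f: "f \<in> F"
    show "proper_colouring V f Y \<longleftrightarrow> (\<forall>x<V. x \<in> sym_diff Y Y0 \<longrightarrow> f x \<in> sym_diff Y Y0)"
      using proper_colouring_iff_closed_sym_diff[OF F[rule_format, OF f] Y0[rule_format, OF f] Y] .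
  qed
  also have "\<dots> \<longleftrightarrow> matching_rel V F `` sym_diff Y Y0 \<subseteq> sym_diff Y Y0"
    by (rule Image_matching_rel_subset_iff[symmetric])
  finally show ?thesis .
qed

lemma card_common_colourings:
  assumes F: "F \<noteq> {}" "\<forall>f\<in>F. perfect_matching V f" and Y0: "\<forall>f\<in>F. proper_colouring V f Y0"
  shows "card {Y. \<forall>f\<in>F. proper_colouring V f Y} = 2 ^ card ({0..<V} // (matching_rel V F)\<^sup>*)"
proof -
  have Y0V: "Y0 \<subseteq> {0..<V}" using F(1) Y0 proper_colouringD(1) by blast
  note saturated = common_colouring_iff_saturated[OF F(2) Y0]
  have "bij_betw (\<lambda>Y. sym_diff Y Y0) {Y. \<forall>f\<in>F. proper_colouring V f Y}
      {D. D \<subseteq> {0..<V} \<and> matching_rel V F `` D \<subseteq> D}"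
  proof (rule bij_betw_byWitness[where f' = "\<lambda>Y. sym_diff Y Y0"])
    show "(\<lambda>Y. sym_diff Y Y0) ` {Y. \<forall>f\<in>F. proper_colouring V f Y}
        \<subseteq> {D. D \<subseteq> {0..<V} \<and> matching_rel V F `` D \<subseteq> D}"
    proof (rule image_subsetI)
      fix Y assume "Y \<in> {Y. \<forall>f\<in>F. proper_colouring V f Y}"
      moreover from this have "Y \<subseteq> {0..<V}" using F(1) proper_colouringD(1) by blast
      ultimately show "sym_diff Y Y0 \<in> {D. D \<subseteq> {0..<V} \<and> matching_rel V F `` D \<subseteq> D}"
        using saturated Y0V by blast
    qed
    show "(\<lambda>Y. sym_diff Y Y0) ` {D. D \<subseteq> {0..<V} \<and> matching_rel V F `` D \<subseteq> D}
        \<subseteq> {Y. \<forall>f\<in>F. proper_colouring V f Y}"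
    proof (rule image_subsetI)
      fix D assume D: "D \<in> {D. D \<subseteq> {0..<V} \<and> matching_rel V F `` D \<subseteq> D}"
      have "sym_diff (sym_diff D Y0) Y0 = D" by blast
      moreover have "sym_diff D Y0 \<subseteq> {0..<V}" using D Y0V by blast
      ultimately show "sym_diff D Y0 \<in> {Y. \<forall>f\<in>F. proper_colouring V f Y}" using saturated D by simp
    qed
  qed blast+
  then have "card {Y. \<forall>f\<in>F. proper_colouring V f Y} = card {D. D \<subseteq> {0..<V} \<and> matching_rel V F `` D \<subseteq> D}"
    by (rule bij_betw_same_card)
  also have "\<dots> = 2 ^ card ({0..<V} // (matching_rel V F)\<^sup>*)"
    using F(2) by (intro card_saturated_subsets_rtrancl matching_rel_subset sym_matching_rel) simp_all
  finally show ?thesis .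
qed

lemma rtrancl_matching_rel_single:
  assumes m: "perfect_matching V m" and "x < V"
  shows "(matching_rel V {m})\<^sup>* `` {x} = {x, m x}"
proof
  have "(x, m x) \<in> matching_rel V {m}" using \<open>x < V\<close> unfolding matching_rel_def by blast
  then show "{x, m x} \<subseteq> (matching_rel V {m})\<^sup>* `` {x}" by auto
  have "y \<in> {x, m x}" if "(x, y) \<in> (matching_rel V {m})\<^sup>*" for y
    using that by induction (auto simp: matching_rel_def perfect_matchingD(3)[OF m])
  then show "(matching_rel V {m})\<^sup>* `` {x} \<subseteq> {x, m x}" by blast
qed

lemma card_proper_colourings:
  assumes m: "perfect_matching (2 * n) m"
  shows "card {Y. proper_colouring (2 * n) m Y} = 2 ^ n"
proof -
  have "card ((matching_rel (2 * n) {m})\<^sup>* `` {x}) = 2" if "x \<in> {0..<2 * n}" for x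
  proof -
    have "x \<noteq> m x" using perfect_matchingD(2)[OF m] that by fastforce
    then show ?thesis using rtrancl_matching_rel_single[OF m] that by (simp add: card_insert_if)
  qed
  then have "2 * card ({0..<2 * n} // (matching_rel (2 * n) {m})\<^sup>*) = card {0..<2 * n}"
    using m by (intro card_quotient_rtrancl_uniform matching_rel_subset sym_matching_rel) auto
  then have "card ({0..<2 * n} // (matching_rel (2 * n) {m})\<^sup>*) = n" by simp
  then show ?thesis
    using card_common_colourings[of "{m}" "2 * n" "canonical_colouring (2 * n) m"]
      m proper_colouring_canonical[OF m] by simp
qed

definition switch :: "(nat \<Rightarrow> nat) \<Rightarrow> nat \<Rightarrow> nat \<Rightarrow> nat \<Rightarrow> nat" where
  "switch t x u = t(x := u, u := x, t x := t u, t u := t x)"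

lemma perfect_matching_switch:
  assumes t: "perfect_matching V t" and "x < V" "u < V" "u \<noteq> x" "t x \<noteq> u"
  shows "perfect_matching V (switch t x u)"
proof -
  note tt = perfect_matchingD[OF t] and t_eq = perfect_matching_eq_iff[OF t]
  define y w where "y = t x" and "w = t u"
  have V: "y < V" "w < V" using assms tt(1) unfolding y_def w_def by auto
  have distinct: "y \<noteq> x" "w \<noteq> u" "w \<noteq> x" "w \<noteq> y" "y \<noteq> u"
    using assms tt(2) t_eq[of u x] t_eq[of u "t x"] unfolding y_def w_def by (auto simp: tt(3))
  have other: "t z \<notin> {x, u, y, w}" if "z \<notin> {x, u, y, w}" for z
    using that t_eq[of z] unfolding y_def w_def by (auto simp: tt(3))
  show ?thesis
    unfolding perfect_matching_def switch_def y_def[symmetric] w_def[symmetric]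
  proof (intro conjI allI impI)
    fix z assume "z < V"
    show "(t(x := u, u := x, y := w, w := y)) z < V"
      using \<open>z < V\<close> assms V tt(1) by simp
    show "(t(x := u, u := x, y := w, w := y)) z \<noteq> z"
      using \<open>z < V\<close> assms(4) distinct tt(2) by auto
    show "(t(x := u, u := x, y := w, w := y)) ((t(x := u, u := x, y := w, w := y)) z) = z"
      using distinct other[of z] tt(3) unfolding y_def w_def by auto
  next
    fix z assume "V \<le> z"
    then show "(t(x := u, u := x, y := w, w := y)) z = z" using assms V tt(4) by auto
  qed
qed

context
  fixes V m t x
  assumes m: "perfect_matching V m" and t: "perfect_matching V t" and x: "x < V" "t x \<noteq> m x"
begin

lemma switch_vertices:
  "m x < V" "m x \<noteq> x" "t x < V" "t x \<noteq> x" "t x \<noteq> m x"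
  "t (m x) \<noteq> m x" "t (m x) \<noteq> x" "t (m x) \<noteq> t x"
  using x perfect_matchingD[OF m] perfect_matchingD[OF t] perfect_matching_eq_iff[OF t, of "m x" x]
    perfect_matching_eq_iff[OF t, of "m x" "t x"] by auto

lemma switch_eq:
  "switch t x (m x) x = m x" "switch t x (m x) (m x) = x"
  "switch t x (m x) (t x) = t (m x)" "switch t x (m x) (t (m x)) = t x"
  "z \<notin> {x, m x, t x, t (m x)} \<Longrightarrow> switch t x (m x) z = t z"
  using switch_vertices unfolding switch_def by auto

lemma card_disagreements_switch:
  "card {z. z < V \<and> switch t x (m x) z \<noteq> m z} < card {z. z < V \<and> t z \<noteq> m z}"
proof -
  define S where "S = {z. z < V \<and> t z \<noteq> m z}"
  have "{z. z < V \<and> switch t x (m x) z \<noteq> m z} \<subseteq> S - {x}"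
  proof
    fix z assume z: "z \<in> {z. z < V \<and> switch t x (m x) z \<noteq> m z}"
    then have "z \<noteq> x" "z \<noteq> m x" using switch_eq(1,2) perfect_matchingD(3)[OF m] by auto
    moreover have "t z \<noteq> m z"
    proof (cases "z = t x \<or> z = t (m x)")
      case True
      then show ?thesis
        using switch_vertices perfect_matchingD(3)[OF t] perfect_matching_eq_iff[OF m, of "t x" x]
          perfect_matching_eq_iff[OF m, of "t (m x)" "m x"] perfect_matchingD(3)[OF m, of x] by auto
    next
      case False
      then show ?thesis using z switch_eq(5)[of z] \<open>z \<noteq> x\<close> \<open>z \<noteq> m x\<close> by simp
    qed
    ultimately show "z \<in> S - {x}" using z unfolding S_def by simp
  qed
  moreover have "finite S" unfolding S_def by simp
  ultimately have "card {z. z < V \<and> switch t x (m x) z \<noteq> m z} \<le> card (S - {x})"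
    by (simp add: card_mono)
  also have "\<dots> < card S" using \<open>finite S\<close> x by (intro card_Diff1_less) (simp_all add: S_def)
  finally show ?thesis unfolding S_def .
qed

text \<open>The repair: possibly swap the colours of \<open>x\<close> and \<open>m x\<close>.\<close>

lemma proper_colouring_unswitch:
  assumes Y': "proper_colouring V m Y'" "proper_colouring V (switch t x (m x)) Y'"
  shows "\<exists>Y. proper_colouring V m Y \<and> proper_colouring V t Y"
proof -
  note v = switch_vertices
  define Y where "Y = (if x \<in> Y' \<longleftrightarrow> t x \<in> Y' then sym_diff Y' {x, m x} else Y')"
  have Y_other: "z \<in> Y \<longleftrightarrow> z \<in> Y'" if "z \<notin> {x, m x}" for z
    using that unfolding Y_def by auto
  have Y_at: "x \<in> Y \<longleftrightarrow> m x \<notin> Y" "x \<in> Y \<longleftrightarrow> t x \<notin> Y" "m x \<in> Y \<longleftrightarrow> t (m x) \<notin> Y"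
    using proper_colouringD(2)[OF Y'(1) x(1)] proper_colouringD(2)[OF Y'(2) v(3)] switch_eq(3) v
    unfolding Y_def by auto
  have "Y \<subseteq> {0..<V}" using proper_colouringD(1)[OF Y'(1)] x(1) v(1) unfolding Y_def by auto
  moreover have "z \<in> Y \<longleftrightarrow> m z \<notin> Y" if "z < V" for z
  proof (cases "z \<in> {x, m x}")
    case False
    then have "m z \<notin> {x, m x}"
      using perfect_matching_eq_iff[OF m, of z x] perfect_matching_eq_iff[OF m, of z "m x"]
        perfect_matchingD(3)[OF m, of x] by auto
    then show ?thesis using proper_colouringD(2)[OF Y'(1) that] Y_other False by simp
  qed (use Y_at perfect_matchingD(3)[OF m, of x] in auto)
  moreover have "z \<in> Y \<longleftrightarrow> t z \<notin> Y" if "z < V" for z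
  proof (cases "z \<in> {x, m x, t x, t (m x)}")
    case True
    then show ?thesis using Y_at perfect_matchingD(3)[OF t] by auto
  next
    case False
    then have "t z \<notin> {x, m x}"
      using perfect_matching_eq_iff[OF t, of z x] perfect_matching_eq_iff[OF t, of z "m x"] by auto
    then show ?thesis
      using proper_colouringD(2)[OF Y'(2) that] switch_eq(5)[OF False] Y_other False by simp
  qed
  ultimately show ?thesis unfolding proper_colouring_def by blast
qed

end

text \<open>The union of two perfect matchings is a disjoint union of even cycles. Instead of
  decomposing it, we switch the second matching to agree with the first on one more edge.\<close>

lemma common_colouring_exists:
  assumes m: "perfect_matching V m" and "perfect_matching V t"
  shows "\<exists>Y. proper_colouring V m Y \<and> proper_colouring V t Y"
  using \<open>perfect_matching V t\<close>
proof (induction "card {x. x < V \<and> t x \<noteq> m x}" arbitrary: t rule: less_induct)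
  case less
  show ?case
  proof (cases "\<forall>x<V. t x = m x")
    case True
    have "t = m"
    proof
      fix z show "t z = m z"
        using True perfect_matchingD(4)[OF m] perfect_matchingD(4)[OF less.prems] by (cases "z < V") auto
    qed
    then show ?thesis using proper_colouring_canonical[OF m] by auto
  next
    case False
    then obtain x where x: "x < V" "t x \<noteq> m x" by auto
    note v = switch_vertices[OF m less.prems x]
    have "perfect_matching V (switch t x (m x))"
      using perfect_matching_switch[OF less.prems x(1) v(1,2)] v(5) by simp
    then obtain Y' where "proper_colouring V m Y'" "proper_colouring V (switch t x (m x)) Y'"
      using less.hyps card_disagreements_switch[OF m less.prems x] by blast
    then show ?thesis by (rule proper_colouring_unswitch[OF m less.prems x])
  qed
qed

lemma card_common_colourings_pair:
  assumes "perfect_matching V m" "perfect_matching V t"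
  shows "card {Y. proper_colouring V m Y \<and> proper_colouring V t Y}
    = 2 ^ card ({0..<V} // (matching_rel V {m, t})\<^sup>*)"
proof -
  obtain Y0 where "proper_colouring V m Y0" "proper_colouring V t Y0"
    using common_colouring_exists[OF assms] by blast
  then have "card {Y. \<forall>f\<in>{m, t}. proper_colouring V f Y}
      = 2 ^ card ({0..<V} // (matching_rel V {m, t})\<^sup>*)"
    using assms by (intro card_common_colourings) auto
  then show ?thesis by simp
qed

section \<open>Bipartitions of coloured graphs\<close>

lemma colored_graphD:
  assumes "colored_graph q V \<sigma>"
  shows "0 < V" "c \<le> q \<Longrightarrow> perfect_matching V (\<sigma> c)" "q < c \<Longrightarrow> \<sigma> c = id"
    "cg_connected q V \<sigma>"
  using assms unfolding colored_graph_def by blast+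

lemma cg_bipartite_iff_proper_colouring:
  assumes pm: "\<forall>c\<le>q. perfect_matching V (\<sigma> c)"
  shows "cg_bipartite q V \<sigma> \<longleftrightarrow> (\<exists>Y. \<forall>c\<le>q. proper_colouring V (\<sigma> c) Y)"
proof
  assume "cg_bipartite q V \<sigma>"
  then obtain black :: "nat \<Rightarrow> bool" where black: "\<forall>c\<le>q. \<forall>x<V. black (\<sigma> c x) \<noteq> black x"
    unfolding cg_bipartite_def by blast
  have "proper_colouring V (\<sigma> c) {x. x < V \<and> black x}" if "c \<le> q" for c
    unfolding proper_colouring_def
  proof (intro conjI allI impI)
    fix x assume "x < V"
    then have "\<sigma> c x < V" "black (\<sigma> c x) \<noteq> black x"
      using perfect_matchingD(1)[OF pm[rule_format, OF that]] black that by simp_all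
    then show "x \<in> {x. x < V \<and> black x} \<longleftrightarrow> \<sigma> c x \<notin> {x. x < V \<and> black x}"
      using \<open>x < V\<close> by simp
  qed auto
  then show "\<exists>Y. \<forall>c\<le>q. proper_colouring V (\<sigma> c) Y" by blast
next
  assume "\<exists>Y. \<forall>c\<le>q. proper_colouring V (\<sigma> c) Y"
  then obtain Y where Y: "\<forall>c\<le>q. proper_colouring V (\<sigma> c) Y" by blast
  have "(\<sigma> c x \<in> Y) \<noteq> (x \<in> Y)" if "c \<le> q" "x < V" for c x
    using proper_colouringD(2)[OF Y[rule_format, OF that(1)] that(2)] by simp
  then show "cg_bipartite q V \<sigma>" unfolding cg_bipartite_def by (intro exI[of _ "\<lambda>x. x \<in> Y"]) simp
qed

lemma quotient_connected:
  assumes "colored_graph q V \<sigma>"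
  shows "{0..<V} // (matching_rel V (\<sigma> ` {..q}))\<^sup>* = {{0..<V}}"
proof -
  let ?R = "matching_rel V (\<sigma> ` {..q})"
  have sub: "?R \<subseteq> {0..<V} \<times> {0..<V}"
    using colored_graphD(2)[OF assms] by (intro matching_rel_subset) blast
  have "?R\<^sup>* `` {x} = {0..<V}" if "x \<in> {0..<V}" for x
  proof
    show "?R\<^sup>* `` {x} \<subseteq> {0..<V}" using rtrancl_closed[OF sub _ that] by blast
    show "{0..<V} \<subseteq> ?R\<^sup>* `` {x}"
    proof
      fix y assume "y \<in> {0..<V}"
      then show "y \<in> ?R\<^sup>* `` {x}"
        using colored_graphD(4)[OF assms] that unfolding cg_connected_def cg_edges_eq by simp
    qed
  qed
  then have "{0..<V} // ?R\<^sup>* = (\<Union>x\<in>{0..<V}. {{0..<V}})" unfolding quotient_def by simp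
  then show ?thesis using colored_graphD(1)[OF assms] by simp
qed

lemma card_bipartitions:
  assumes "colored_graph q V \<sigma>"
  shows "card {Y. \<forall>c\<le>q. proper_colouring V (\<sigma> c) Y} = (if cg_bipartite q V \<sigma> then 2 else 0)"
proof -
  have pm: "\<forall>c\<le>q. perfect_matching V (\<sigma> c)" using colored_graphD(2)[OF assms] by blast
  show ?thesis
  proof (cases "cg_bipartite q V \<sigma>")
    case True
    then obtain Y0 where Y0: "\<forall>c\<le>q. proper_colouring V (\<sigma> c) Y0"
      using cg_bipartite_iff_proper_colouring[OF pm] by blast
    have "card {Y. \<forall>f\<in>\<sigma> ` {..q}. proper_colouring V f Y}
        = 2 ^ card ({0..<V} // (matching_rel V (\<sigma> ` {..q}))\<^sup>*)"
      by (rule card_common_colourings) (use pm Y0 in auto)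
    moreover have "{Y. \<forall>f\<in>\<sigma> ` {..q}. proper_colouring V f Y} = {Y. \<forall>c\<le>q. proper_colouring V (\<sigma> c) Y}"
      by auto
    ultimately show ?thesis using True unfolding quotient_connected[OF assms] by simp
  next
    case False
    then have "{Y. \<forall>c\<le>q. proper_colouring V (\<sigma> c) Y} = {}"
      using cg_bipartite_iff_proper_colouring[OF pm] by blast
    then show ?thesis using False by (metis card.empty)
  qed
qed

section \<open>Relabelling vertices\<close>

definition relabel :: "(nat \<Rightarrow> nat) \<Rightarrow> (nat \<Rightarrow> nat) \<Rightarrow> nat \<Rightarrow> nat" where
  "relabel \<pi> f = \<pi> \<circ> f \<circ> inv \<pi>"

lemma rtrancl_map_prod_bij:
  assumes "bij f"
  shows "(map_prod f f ` R)\<^sup>* = map_prod f f ` R\<^sup>*"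
proof (intro equalityI subsetI)
  fix p assume "p \<in> (map_prod f f ` R)\<^sup>*"
  then obtain a b where ab: "(a, b) \<in> (map_prod f f ` R)\<^sup>*" "p = (a, b)" by (cases p) auto
  have "(inv f a, inv f b) \<in> R\<^sup>*" using ab(1)
  proof induction
    case (step b c)
    then obtain b' c' where "(b', c') \<in> R" "b = f b'" "c = f c'" by auto
    then show ?case
      using step.IH inv_f_f[OF bij_is_inj[OF assms]] by (simp add: rtrancl_into_rtrancl)
  qed simp
  moreover have "p = map_prod f f (inv f a, inv f b)"
    using ab(2) surj_f_inv_f[OF bij_is_surj[OF assms]] by simp
  ultimately show "p \<in> map_prod f f ` R\<^sup>*" by blast
next
  fix p assume "p \<in> map_prod f f ` R\<^sup>*"
  then obtain a b where "(a, b) \<in> R\<^sup>*" "p = (f a, f b)" by auto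
  moreover have "(f a, f b) \<in> (map_prod f f ` R)\<^sup>*" if "(a, b) \<in> R\<^sup>*" for a b
    using that by induction (auto intro: rtrancl_into_rtrancl)
  ultimately show "p \<in> (map_prod f f ` R)\<^sup>*" by simp
qed

lemma card_quotient_map_prod:
  assumes "inj f"
  shows "card ((f ` A) // (map_prod f f ` r)) = card (A // r)"
proof -
  have "(map_prod f f ` r) `` {f x} = f ` (r `` {x})" for x
    using injD[OF assms] by auto
  then have "(f ` A) // (map_prod f f ` r) = image f ` (A // r)"
    unfolding quotient_def by auto
  moreover have "inj_on (image f) (A // r)"
    using inj_image_eq_iff[OF assms] by (auto intro: inj_onI)
  ultimately show ?thesis by (simp add: card_image)
qed

context
  fixes \<pi> :: "nat \<Rightarrow> nat" and V :: nat
  assumes perm: "\<pi> permutes {0..<V}"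
begin

lemma relabel_apply: "relabel \<pi> f (\<pi> x) = \<pi> (f x)"
  unfolding relabel_def using permutes_inverses(2)[OF perm] by simp

lemma relabel_id: "relabel \<pi> id = id"
  unfolding relabel_def using permutes_inverses(1)[OF perm] by (simp add: fun_eq_iff)

lemma relabel_surj:
  obtains y where "x = \<pi> y" "y < V \<longleftrightarrow> x < V"
proof
  show "x = \<pi> (inv \<pi> x)" using permutes_inverses(1)[OF perm] by simp
  show "inv \<pi> x < V \<longleftrightarrow> x < V" using permutes_in_image[OF permutes_inv[OF perm]] by simp
qed

lemma perfect_matching_relabel:
  assumes "perfect_matching V f"
  shows "perfect_matching V (relabel \<pi> f)"
proof -
  note f = perfect_matchingD[OF assms]
  have lt: "\<pi> y < V \<longleftrightarrow> y < V" for y using permutes_in_image[OF perm] by simp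
  have "relabel \<pi> f x < V \<and> relabel \<pi> f x \<noteq> x \<and> relabel \<pi> f (relabel \<pi> f x) = x" if "x < V" for x
  proof -
    obtain y where y: "x = \<pi> y" "y < V \<longleftrightarrow> x < V" by (rule relabel_surj)
    with that have "y < V" by simp
    then show ?thesis
      unfolding y(1) using f(1,2,3) lt relabel_apply permutes_inj[OF perm] by (simp add: inj_eq)
  qed
  moreover have "relabel \<pi> f x = x" if "V \<le> x" for x
  proof -
    obtain y where y: "x = \<pi> y" "y < V \<longleftrightarrow> x < V" by (rule relabel_surj)
    with that have "\<not> y < V" by simp
    then have "f y = y" "\<pi> y = y" using f(4) permutes_not_in[OF perm] by auto
    then show ?thesis unfolding y(1) relabel_apply by simp
  qed
  ultimately show ?thesis unfolding perfect_matching_def by blast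
qed

lemma relabel_conjugate:
  assumes f: "perfect_matching V f" and g: "perfect_matching V g" and comm: "\<forall>x<V. \<pi> (f x) = g (\<pi> x)"
  shows "g = relabel \<pi> f"
proof
  fix x
  obtain y where y: "x = \<pi> y" "y < V \<longleftrightarrow> x < V" by (rule relabel_surj)
  have rel: "relabel \<pi> f x = \<pi> (f y)" unfolding y(1) by (rule relabel_apply)
  show "g x = relabel \<pi> f x"
  proof (cases "y < V")
    case True
    then show ?thesis using comm y(1) rel by simp
  next
    case False
    then have "f y = y" "\<pi> y = y" using perfect_matchingD(4)[OF f] permutes_not_in[OF perm] by auto
    then show ?thesis using y perfect_matchingD(4)[OF g] False rel by simp
  qed
qed

lemma proper_colouring_relabel:
  assumes "proper_colouring V f Y"
  shows "proper_colouring V (relabel \<pi> f) (\<pi> ` Y)"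
proof -
  have "\<pi> ` Y \<subseteq> {0..<V}" using proper_colouringD(1)[OF assms] permutes_image[OF perm] by blast
  moreover have "x \<in> \<pi> ` Y \<longleftrightarrow> relabel \<pi> f x \<notin> \<pi> ` Y" if "x < V" for x
  proof -
    obtain y where "x = \<pi> y" "y < V \<longleftrightarrow> x < V" by (rule relabel_surj)
    then show ?thesis
      using that proper_colouringD(2)[OF assms] relabel_apply inj_image_mem_iff[OF permutes_inj[OF perm]]
      by simp
  qed
  ultimately show ?thesis unfolding proper_colouring_def by blast
qed

lemma matching_rel_relabel: "matching_rel V (relabel \<pi> ` F) = map_prod \<pi> \<pi> ` matching_rel V F"
proof (intro equalityI subsetI)
  fix p assume "p \<in> matching_rel V (relabel \<pi> ` F)"
  then obtain x f where p: "p = (x, relabel \<pi> f x)" "x < V" "f \<in> F"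
    unfolding matching_rel_def by blast
  obtain y where y: "x = \<pi> y" "y < V \<longleftrightarrow> x < V" by (rule relabel_surj)
  have "p = map_prod \<pi> \<pi> (y, f y)" using p(1) y(1) by (simp add: relabel_apply)
  moreover have "(y, f y) \<in> matching_rel V F" using p(2,3) y(2) unfolding matching_rel_def by blast
  ultimately show "p \<in> map_prod \<pi> \<pi> ` matching_rel V F" by blast
next
  fix p assume "p \<in> map_prod \<pi> \<pi> ` matching_rel V F"
  then obtain y f where p: "p = (\<pi> y, \<pi> (f y))" "y < V" "f \<in> F"
    unfolding matching_rel_def by auto
  then have "p = (\<pi> y, relabel \<pi> f (\<pi> y))" "\<pi> y < V"
    using permutes_in_image[OF perm] by (simp_all add: relabel_apply)
  with p(3) show "p \<in> matching_rel V (relabel \<pi> ` F)" unfolding matching_rel_def by blast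
qed

lemma rtrancl_matching_rel_relabel:
  "(matching_rel V (relabel \<pi> ` F))\<^sup>* = map_prod \<pi> \<pi> ` (matching_rel V F)\<^sup>*"
  unfolding matching_rel_relabel by (rule rtrancl_map_prod_bij[OF permutes_bij[OF perm]])

lemma bicoloured_cycles_relabel: "bicoloured_cycles V (relabel \<pi> \<circ> \<sigma>) i = bicoloured_cycles V \<sigma> i"
proof -
  have "relabel \<pi> ` {\<sigma> 0, \<sigma> i} = {(relabel \<pi> \<circ> \<sigma>) 0, (relabel \<pi> \<circ> \<sigma>) i}" by simp
  then show ?thesis
    unfolding bicoloured_cycles_eq
    using rtrancl_matching_rel_relabel[of "{\<sigma> 0, \<sigma> i}"] permutes_image[OF perm]
      card_quotient_map_prod[OF permutes_inj[OF perm], of "{0..<V}"] by metis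
qed

lemma cg_order_relabel: "cg_order q V (relabel \<pi> \<circ> \<sigma>) = cg_order q V \<sigma>"
  unfolding cg_order_def F0_def bicoloured_cycles_relabel ..

lemma cg_connected_relabel:
  assumes "cg_connected q V \<sigma>"
  shows "cg_connected q V (relabel \<pi> \<circ> \<sigma>)"
  unfolding cg_connected_def
proof (intro allI impI)
  fix x y assume "x < V" "y < V"
  obtain x' y' where x': "x = \<pi> x'" "x' < V \<longleftrightarrow> x < V" and y': "y = \<pi> y'" "y' < V \<longleftrightarrow> y < V"
    using relabel_surj by metis
  then have "(x', y') \<in> (cg_edges q V \<sigma>)\<^sup>*"
    using assms \<open>x < V\<close> \<open>y < V\<close> unfolding cg_connected_def by simp
  then have "(x, y) \<in> (matching_rel V (relabel \<pi> ` \<sigma> ` {..q}))\<^sup>*"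
    unfolding rtrancl_matching_rel_relabel cg_edges_eq x'(1) y'(1) by blast
  then show "(x, y) \<in> (cg_edges q V (relabel \<pi> \<circ> \<sigma>))\<^sup>*"
    unfolding cg_edges_eq image_comp .
qed

lemma colored_graph_relabel:
  assumes "colored_graph q V \<sigma>"
  shows "colored_graph q V (relabel \<pi> \<circ> \<sigma>)"
  using colored_graphD[OF assms] relabel_id perfect_matching_relabel cg_connected_relabel
  unfolding colored_graph_def by simp

lemma cg_bipartite_relabel:
  assumes "colored_graph q V \<sigma>" "cg_bipartite q V \<sigma>"
  shows "cg_bipartite q V (relabel \<pi> \<circ> \<sigma>)"
proof -
  have pm: "\<forall>c\<le>q. perfect_matching V (\<sigma> c)" using colored_graphD(2)[OF assms(1)] by blast
  then obtain Y where "\<forall>c\<le>q. proper_colouring V (\<sigma> c) Y"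
    using assms(2) cg_bipartite_iff_proper_colouring by blast
  then have "\<forall>c\<le>q. proper_colouring V ((relabel \<pi> \<circ> \<sigma>) c) (\<pi> ` Y)"
    using proper_colouring_relabel by simp
  moreover have "\<forall>c\<le>q. perfect_matching V ((relabel \<pi> \<circ> \<sigma>) c)"
    using pm perfect_matching_relabel by simp
  ultimately show ?thesis using cg_bipartite_iff_proper_colouring by blast
qed

end

section \<open>Edge flips and twisted coloured graphs\<close>

text \<open>If \<open>X\<close> and \<open>Y\<close> both properly colour \<open>m\<close>, they disagree on both ends of an \<open>m\<close>-edge
  or on neither; swapping the ends of the edges on which they disagree is a vertex permutation
  carrying \<open>X\<close> to \<open>Y\<close> that moves every vertex only along \<open>m\<close>.\<close>

definition edge_flip :: "nat \<Rightarrow> (nat \<Rightarrow> nat) \<Rightarrow> nat set \<Rightarrow> nat set \<Rightarrow> nat \<Rightarrow> nat" where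
  "edge_flip V m X Y y = (if y < V \<and> (y \<in> X) \<noteq> (y \<in> Y) then m y else y)"

lemma edge_flip_commute: "edge_flip V m X Y = edge_flip V m Y X"
  unfolding edge_flip_def by (auto simp: fun_eq_iff)

lemma edge_flip_in_rtrancl:
  assumes "m \<in> F"
  shows "(y, edge_flip V m X Y y) \<in> (matching_rel V F)\<^sup>*"
proof (cases "y < V")
  case True
  then have "(y, m y) \<in> matching_rel V F" using assms unfolding matching_rel_def by blast
  then show ?thesis unfolding edge_flip_def by auto
qed (simp add: edge_flip_def)

context
  fixes V m X Y
  assumes m: "perfect_matching V m" and X: "proper_colouring V m X" and Y: "proper_colouring V m Y"
begin

lemma edge_flip_involution: "edge_flip V m X Y (edge_flip V m X Y y) = y"
proof (cases "y < V \<and> (y \<in> X) \<noteq> (y \<in> Y)")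
  case True
  then have "m y < V" "(m y \<in> X) \<noteq> (m y \<in> Y)" "m (m y) = y"
    using perfect_matchingD[OF m] proper_colouringD(2)[OF X, of y] proper_colouringD(2)[OF Y, of y]
    by auto
  then show ?thesis using True unfolding edge_flip_def by simp
qed (auto simp: edge_flip_def)

lemma edge_flip_permutes: "edge_flip V m X Y permutes {0..<V}"
proof (rule bij_imp_permutes)
  have "edge_flip V m X Y y \<in> {0..<V}" if "y \<in> {0..<V}" for y
    using that perfect_matchingD(1)[OF m] unfolding edge_flip_def by auto
  then show "bij_betw (edge_flip V m X Y) {0..<V} {0..<V}"
    by (intro bij_betw_byWitness[where f' = "edge_flip V m X Y"]) (auto simp: edge_flip_involution)
qed (simp add: edge_flip_def)

lemma inv_edge_flip: "inv (edge_flip V m X Y) = edge_flip V m X Y"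
  by (rule inv_equality) (simp_all add: edge_flip_involution)

lemma edge_flip_image: "edge_flip V m X Y ` X = Y"
proof -
  have key: "edge_flip V m X Y z \<in> Y \<longleftrightarrow> z \<in> X" if "z < V" for z
    using that proper_colouringD(2)[OF X, of z] proper_colouringD(2)[OF Y, of z]
    unfolding edge_flip_def by auto
  have "edge_flip V m X Y ` X \<subseteq> Y" using key proper_colouringD(1)[OF X] by auto
  moreover have "y \<in> edge_flip V m X Y ` X" if "y \<in> Y" for y
  proof -
    have "y < V" using that proper_colouringD(1)[OF Y] by auto
    moreover have "edge_flip V m X Y y < V"
      using permutes_in_image[OF edge_flip_permutes, of y] \<open>y < V\<close> by simp
    ultimately have "edge_flip V m X Y y \<in> X"
      using key[of "edge_flip V m X Y y"] that by (simp add: edge_flip_involution)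
    then show ?thesis using edge_flip_involution[of y] by (metis image_eqI)
  qed
  ultimately show ?thesis by blast
qed

lemma relabel_edge_flip_involution:
  "relabel (edge_flip V m X Y) (relabel (edge_flip V m X Y) t) = t"
  unfolding relabel_def inv_edge_flip by (simp add: fun_eq_iff edge_flip_involution)

lemma matching_rel_relabel_edge_flip:
  assumes "m \<in> F" "t \<in> F" "perfect_matching V t"
  shows "matching_rel V (insert (relabel (edge_flip V m X Y) t) F) \<subseteq> (matching_rel V F)\<^sup>*"
proof
  let ?f = "edge_flip V m X Y"
  fix p assume "p \<in> matching_rel V (insert (relabel ?f t) F)"
  then obtain x g where p: "p = (x, g x)" "x < V" "g = relabel ?f t \<or> g \<in> F"
    unfolding matching_rel_def by blast
  show "p \<in> (matching_rel V F)\<^sup>*"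
  proof (cases "g \<in> F")
    case True
    then show ?thesis using p unfolding matching_rel_def by blast
  next
    case False
    then have g: "g x = ?f (t (?f x))" using p(3) unfolding relabel_def inv_edge_flip by simp
    have "?f x < V" using permutes_in_image[OF edge_flip_permutes, of x] p(2) by simp
    then have "(?f x, t (?f x)) \<in> matching_rel V F" using assms(2) unfolding matching_rel_def by blast
    then have "(x, t (?f x)) \<in> (matching_rel V F)\<^sup>*"
      by (rule rtrancl_into_rtrancl[OF edge_flip_in_rtrancl[OF assms(1)]])
    then show ?thesis
      unfolding p(1) g by (rule rtrancl_trans[OF _ edge_flip_in_rtrancl[OF assms(1)]])
  qed
qed

end

text \<open>Twisting by a family \<open>X\<close> of colourings of the colour-0 matching conjugates each colour
  \<open>i \<ge> 1\<close> by the flip between \<open>X i\<close> and the canonical colouring. It keeps every colour-0i cycle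
  and exchanges ``\<open>X i\<close> properly colours colour \<open>i\<close>'' with ``the canonical colouring does''.\<close>

definition twist :: "nat \<Rightarrow> nat \<Rightarrow> (nat \<Rightarrow> nat set) \<Rightarrow> (nat \<Rightarrow> nat \<Rightarrow> nat) \<Rightarrow> nat \<Rightarrow> nat \<Rightarrow> nat" where
  "twist q V X \<sigma> c = (if c \<in> {1..q}
     then relabel (edge_flip V (\<sigma> 0) (X c) (canonical_colouring V (\<sigma> 0))) (\<sigma> c) else \<sigma> c)"

lemma twist_zero [simp]: "twist q V X \<sigma> 0 = \<sigma> 0"
  unfolding twist_def by simp

lemma twist_outside: "c \<notin> {1..q} \<Longrightarrow> twist q V X \<sigma> c = \<sigma> c"
  unfolding twist_def by auto

lemma twist_in_range:
  "i \<in> {1..q} \<Longrightarrow> twist q V X \<sigma> i = relabel (edge_flip V (\<sigma> 0) (X i) (canonical_colouring V (\<sigma> 0))) (\<sigma> i)"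
  unfolding twist_def by simp

definition canonically_bipartite :: "nat \<Rightarrow> nat \<Rightarrow> (nat \<Rightarrow> nat \<Rightarrow> nat) \<Rightarrow> bool" where
  "canonically_bipartite q V \<sigma> \<longleftrightarrow> (\<forall>c\<le>q. proper_colouring V (\<sigma> c) (canonical_colouring V (\<sigma> 0)))"

context
  fixes q V :: nat and X :: "nat \<Rightarrow> nat set" and \<sigma> :: "nat \<Rightarrow> nat \<Rightarrow> nat"
  assumes pm: "\<forall>c\<le>q. perfect_matching V (\<sigma> c)"
    and X: "\<forall>i\<in>{1..q}. proper_colouring V (\<sigma> 0) (X i)"
begin

lemma twist_flip_facts:
  assumes "i \<in> {1..q}"
  shows "perfect_matching V (\<sigma> 0)" "proper_colouring V (\<sigma> 0) (X i)"
    "proper_colouring V (\<sigma> 0) (canonical_colouring V (\<sigma> 0))"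
  using pm X assms proper_colouring_canonical by auto

lemma twist_twist: "twist q V X (twist q V X \<sigma>) = \<sigma>"
proof
  fix c show "twist q V X (twist q V X \<sigma>) c = \<sigma> c"
    using relabel_edge_flip_involution[OF twist_flip_facts] twist_outside[of c q]
    by (cases "c \<in> {1..q}") (simp_all add: twist_def)
qed

lemma perfect_matching_twist: "c \<le> q \<Longrightarrow> perfect_matching V (twist q V X \<sigma> c)"
  using pm perfect_matching_relabel[OF edge_flip_permutes[OF twist_flip_facts]]
  by (cases "c \<in> {1..q}") (simp_all add: twist_def)

lemma proper_colouring_twist_canonical:
  assumes "i \<in> {1..q}" "proper_colouring V (\<sigma> i) (X i)"
  shows "proper_colouring V (twist q V X \<sigma> i) (canonical_colouring V (\<sigma> 0))"
  using proper_colouring_relabel[OF edge_flip_permutes[OF twist_flip_facts[OF assms(1)]] assms(2)]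
  unfolding edge_flip_image[OF twist_flip_facts[OF assms(1)]] twist_in_range[OF assms(1)] .

lemma proper_colouring_twist:
  assumes "i \<in> {1..q}" "canonically_bipartite q V \<sigma>"
  shows "proper_colouring V (twist q V X \<sigma> i) (X i)"
proof -
  note facts = twist_flip_facts[OF assms(1)]
  have "proper_colouring V (\<sigma> i) (canonical_colouring V (\<sigma> 0))"
    using assms unfolding canonically_bipartite_def by simp
  have "edge_flip V (\<sigma> 0) (X i) (canonical_colouring V (\<sigma> 0))
      = edge_flip V (\<sigma> 0) (canonical_colouring V (\<sigma> 0)) (X i)"
    by (rule edge_flip_commute)
  then show ?thesis
    using proper_colouring_relabel[OF edge_flip_permutes[OF facts] \<open>proper_colouring V (\<sigma> i) _\<close>]
      edge_flip_image[OF facts(1,3,2)]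
    unfolding twist_in_range[OF assms(1)] by simp
qed

lemma rtrancl_bicoloured_twist:
  assumes "i \<in> {1..q}"
  shows "(matching_rel V {\<sigma> 0, twist q V X \<sigma> i})\<^sup>* = (matching_rel V {\<sigma> 0, \<sigma> i})\<^sup>*"
proof -
  note facts = twist_flip_facts[OF assms]
  have pm_i: "perfect_matching V (\<sigma> i)" "perfect_matching V (twist q V X \<sigma> i)"
    using pm perfect_matching_twist assms by auto
  have mono: "matching_rel V F \<subseteq> matching_rel V G" if "F \<subseteq> G" for F G
    using that unfolding matching_rel_def by blast
  have "matching_rel V {\<sigma> 0, twist q V X \<sigma> i} \<subseteq> (matching_rel V {\<sigma> 0, \<sigma> i})\<^sup>*"
    using matching_rel_relabel_edge_flip[OF facts, of "{\<sigma> 0, \<sigma> i}" "\<sigma> i"] pm_i(1)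
      mono[of "{\<sigma> 0, twist q V X \<sigma> i}" "insert (twist q V X \<sigma> i) {\<sigma> 0, \<sigma> i}"]
    unfolding twist_in_range[OF assms] by auto
  moreover have "matching_rel V {\<sigma> 0, \<sigma> i} \<subseteq> (matching_rel V {\<sigma> 0, twist q V X \<sigma> i})\<^sup>*"
    using matching_rel_relabel_edge_flip[OF facts, of "{\<sigma> 0, twist q V X \<sigma> i}" "twist q V X \<sigma> i"]
      pm_i(2) mono[of "{\<sigma> 0, \<sigma> i}" "insert (\<sigma> i) {\<sigma> 0, twist q V X \<sigma> i}"]
    unfolding twist_in_range[OF assms] relabel_edge_flip_involution[OF facts] by auto
  ultimately show ?thesis by (metis rtrancl_subset_rtrancl subset_antisym)
qed

lemma cg_order_twist: "cg_order q V (twist q V X \<sigma>) = cg_order q V \<sigma>"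
proof -
  have "bicoloured_cycles V (twist q V X \<sigma>) i = bicoloured_cycles V \<sigma> i" if "i \<in> {1..q}" for i
    using rtrancl_bicoloured_twist[OF that] by (simp add: bicoloured_cycles_eq)
  then show ?thesis unfolding cg_order_def F0_def by simp
qed

lemma canonically_bipartite_twist:
  assumes "\<forall>i\<in>{1..q}. proper_colouring V (\<sigma> i) (X i)"
  shows "canonically_bipartite q V (twist q V X \<sigma>)"
  unfolding canonically_bipartite_def twist_zero
proof (intro allI impI)
  fix c assume "c \<le> q"
  show "proper_colouring V (twist q V X \<sigma> c) (canonical_colouring V (\<sigma> 0))"
  proof (cases "c = 0")
    case True
    then show ?thesis using proper_colouring_canonical pm by simp
  next
    case False
    then have "c \<in> {1..q}" using \<open>c \<le> q\<close> by simp
    then show ?thesis using proper_colouring_twist_canonical assms by blast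
  qed
qed

lemma cg_edges_twist_subset: "cg_edges q V (twist q V X \<sigma>) \<subseteq> (cg_edges q V \<sigma>)\<^sup>*"
  unfolding cg_edges_eq
proof
  fix p assume "p \<in> matching_rel V (twist q V X \<sigma> ` {..q})"
  then obtain x c where p: "p = (x, twist q V X \<sigma> c x)" "x < V" "c \<le> q"
    unfolding matching_rel_def by blast
  show "p \<in> (matching_rel V (\<sigma> ` {..q}))\<^sup>*"
  proof (cases "c \<in> {1..q}")
    case True
    have "p \<in> matching_rel V (insert (twist q V X \<sigma> c) (\<sigma> ` {..q}))"
      using p unfolding matching_rel_def by blast
    then show ?thesis
      using matching_rel_relabel_edge_flip[OF twist_flip_facts[OF True], of "\<sigma> ` {..q}" "\<sigma> c"] pm p(3)
      unfolding twist_in_range[OF True] by auto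
  next
    case False
    then show ?thesis using p twist_outside[OF False] unfolding matching_rel_def by blast
  qed
qed

end

lemma colored_graph_twist:
  assumes cg: "colored_graph q V \<sigma>" and X: "\<forall>i\<in>{1..q}. proper_colouring V (\<sigma> 0) (X i)"
  shows "colored_graph q V (twist q V X \<sigma>)"
proof -
  have pm: "\<forall>c\<le>q. perfect_matching V (\<sigma> c)" using colored_graphD(2)[OF cg] by blast
  have pm': "\<forall>c\<le>q. perfect_matching V (twist q V X \<sigma> c)" using perfect_matching_twist[OF pm X] by blast
  have "cg_edges q V \<sigma> \<subseteq> (cg_edges q V (twist q V X \<sigma>))\<^sup>*"
    using cg_edges_twist_subset[OF pm', of X] X twist_twist[OF pm X] by simp
  then have "cg_connected q V (twist q V X \<sigma>)"
    using colored_graphD(4)[OF cg] rtrancl_subset_rtrancl unfolding cg_connected_def by blast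
  moreover have "twist q V X \<sigma> c = id" if "q < c" for c
  proof -
    have "twist q V X \<sigma> c = \<sigma> c" using that by (intro twist_outside) simp
    then show ?thesis using colored_graphD(3)[OF cg that] by simp
  qed
  ultimately show ?thesis
    using colored_graphD(1)[OF cg] pm' unfolding colored_graph_def by simp
qed

section \<open>Double counting labelled rooted graphs\<close>

lemma labelled_rooted_iff:
  "(\<sigma>, r) \<in> labelled_rooted q n \<delta> bip \<longleftrightarrow>
    colored_graph q (2 * n) \<sigma> \<and> r < 2 * n \<and> cg_order q (2 * n) \<sigma> = \<delta> \<and>
    (bip \<longrightarrow> cg_bipartite q (2 * n) \<sigma>)"
  unfolding labelled_rooted_def by simp

lemma finite_colored_graphs: "finite {\<sigma>. colored_graph q V \<sigma>}"
proof (rule finite_subset)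
  show "{\<sigma>. colored_graph q V \<sigma>} \<subseteq>
      {\<sigma>. \<forall>c. (c \<in> {..q} \<longrightarrow> \<sigma> c \<in> {f. f permutes {0..<V}}) \<and> (c \<notin> {..q} \<longrightarrow> \<sigma> c = id)}"
    using colored_graphD(2,3) perfect_matching_permutes by fastforce
  show "finite {\<sigma>. \<forall>c. (c \<in> {..q} \<longrightarrow> \<sigma> c \<in> {f. f permutes {0..<V}}) \<and> (c \<notin> {..q} \<longrightarrow> \<sigma> c = id)}"
    by (intro finite_set_of_finite_funs finite_permutations) simp_all
qed

lemma finite_labelled_rooted: "finite (labelled_rooted q n \<delta> bip)"
  by (rule finite_subset[of _ "{\<sigma>. colored_graph q (2 * n) \<sigma>} \<times> {..<2 * n}"])
    (auto simp: labelled_rooted_def finite_colored_graphs)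

lemma finite_proper_colourings: "finite {Y. proper_colouring V f Y}"
  by (rule finite_subset[of _ "Pow {0..<V}"]) (auto dest: proper_colouringD(1))

lemma twist_labelled_rooted:
  assumes "(\<sigma>, r) \<in> labelled_rooted q n \<delta> False"
    and "\<forall>i\<in>{1..q}. proper_colouring (2 * n) (\<sigma> 0) (X i)"
  shows "(twist q (2 * n) X \<sigma>, r) \<in> labelled_rooted q n \<delta> False"
proof -
  have cg: "colored_graph q (2 * n) \<sigma>" using assms(1) unfolding labelled_rooted_iff by blast
  then have "\<forall>c\<le>q. perfect_matching (2 * n) (\<sigma> c)" using colored_graphD(2) by blast
  then show ?thesis
    using assms colored_graph_twist[OF cg assms(2)] cg_order_twist unfolding labelled_rooted_iff by simp
qed

definition canonical_rooted :: "nat \<Rightarrow> nat \<Rightarrow> int \<Rightarrow> ((nat \<Rightarrow> nat \<Rightarrow> nat) \<times> nat) set" where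
  "canonical_rooted q n \<delta> = {g \<in> labelled_rooted q n \<delta> False. canonically_bipartite q (2 * n) (fst g)}"

definition twist_rooted ::
    "nat \<Rightarrow> nat \<Rightarrow> ((nat \<Rightarrow> nat \<Rightarrow> nat) \<times> nat) \<times> (nat \<Rightarrow> nat set)
      \<Rightarrow> ((nat \<Rightarrow> nat \<Rightarrow> nat) \<times> nat) \<times> (nat \<Rightarrow> nat set)" where
  "twist_rooted q V = (\<lambda>((\<sigma>, r), X). ((twist q V X \<sigma>, r), X))"

lemma bij_betw_twist_rooted:
  fixes \<X> :: "(nat \<Rightarrow> nat) \<Rightarrow> (nat \<Rightarrow> nat set) set"
  assumes \<X>: "\<And>m X i. X \<in> \<X> m \<Longrightarrow> i \<in> {1..q} \<Longrightarrow> proper_colouring (2 * n) m (X i)"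
  shows "bij_betw (twist_rooted q (2 * n))
    (SIGMA g:labelled_rooted q n \<delta> False.
      {X \<in> \<X> (fst g 0). \<forall>i\<in>{1..q}. proper_colouring (2 * n) (fst g i) (X i)})
    (SIGMA g:canonical_rooted q n \<delta>. \<X> (fst g 0))"
proof (rule bij_betw_byWitness[where f' = "twist_rooted q (2 * n)"])
  have facts: "\<forall>c\<le>q. perfect_matching (2 * n) (\<sigma> c)" "\<forall>i\<in>{1..q}. proper_colouring (2 * n) (\<sigma> 0) (X i)"
    if "(\<sigma>, r) \<in> labelled_rooted q n \<delta> False" "X \<in> \<X> (\<sigma> 0)" for \<sigma> r X
    using that \<X> colored_graphD(2) unfolding labelled_rooted_iff by blast+
  have inv: "twist q (2 * n) X (twist q (2 * n) X \<sigma>) = \<sigma>"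
    if "(\<sigma>, r) \<in> labelled_rooted q n \<delta> False" "X \<in> \<X> (\<sigma> 0)" for \<sigma> r X
    using twist_twist[OF facts[OF that]] .
  have lr: "(twist q (2 * n) X \<sigma>, r) \<in> labelled_rooted q n \<delta> False"
    if "(\<sigma>, r) \<in> labelled_rooted q n \<delta> False" "X \<in> \<X> (\<sigma> 0)" for \<sigma> r X
    using twist_labelled_rooted[OF that(1) facts(2)[OF that]] .
  have canonical: "canonically_bipartite q (2 * n) (twist q (2 * n) X \<sigma>)"
    if "(\<sigma>, r) \<in> labelled_rooted q n \<delta> False" "X \<in> \<X> (\<sigma> 0)"
      "\<forall>i\<in>{1..q}. proper_colouring (2 * n) (\<sigma> i) (X i)" for \<sigma> r X
    using canonically_bipartite_twist[OF facts[OF that(1,2)] that(3)] .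
  have family: "proper_colouring (2 * n) (twist q (2 * n) X \<sigma> i) (X i)"
    if "(\<sigma>, r) \<in> labelled_rooted q n \<delta> False" "X \<in> \<X> (\<sigma> 0)" "canonically_bipartite q (2 * n) \<sigma>"
      "i \<in> {1..q}" for \<sigma> r X i
    using proper_colouring_twist[OF facts[OF that(1,2)] that(4,3)] .
  show "\<forall>a\<in>(SIGMA g:labelled_rooted q n \<delta> False.
      {X \<in> \<X> (fst g 0). \<forall>i\<in>{1..q}. proper_colouring (2 * n) (fst g i) (X i)}).
      twist_rooted q (2 * n) (twist_rooted q (2 * n) a) = a"
    using inv by (auto simp: twist_rooted_def)
  show "\<forall>a\<in>(SIGMA g:canonical_rooted q n \<delta>. \<X> (fst g 0)).
      twist_rooted q (2 * n) (twist_rooted q (2 * n) a) = a"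
    using inv by (auto simp: twist_rooted_def canonical_rooted_def)
  show "twist_rooted q (2 * n) ` (SIGMA g:labelled_rooted q n \<delta> False.
      {X \<in> \<X> (fst g 0). \<forall>i\<in>{1..q}. proper_colouring (2 * n) (fst g i) (X i)})
      \<subseteq> (SIGMA g:canonical_rooted q n \<delta>. \<X> (fst g 0))"
    using lr canonical by (auto simp: twist_rooted_def canonical_rooted_def)
  show "twist_rooted q (2 * n) ` (SIGMA g:canonical_rooted q n \<delta>. \<X> (fst g 0))
      \<subseteq> (SIGMA g:labelled_rooted q n \<delta> False.
        {X \<in> \<X> (fst g 0). \<forall>i\<in>{1..q}. proper_colouring (2 * n) (fst g i) (X i)})"
    using lr family by (auto simp: twist_rooted_def canonical_rooted_def)
qed

lemma sum_twist_pairs: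
  fixes \<X> :: "(nat \<Rightarrow> nat) \<Rightarrow> (nat \<Rightarrow> nat set) set"
  assumes "\<And>m X i. X \<in> \<X> m \<Longrightarrow> i \<in> {1..q} \<Longrightarrow> proper_colouring (2 * n) m (X i)"
    and "\<And>m. finite (\<X> m)"
  shows "(\<Sum>g\<in>labelled_rooted q n \<delta> False.
      card {X \<in> \<X> (fst g 0). \<forall>i\<in>{1..q}. proper_colouring (2 * n) (fst g i) (X i)})
    = (\<Sum>g\<in>canonical_rooted q n \<delta>. card (\<X> (fst g 0)))"
proof -
  have "card (SIGMA g:labelled_rooted q n \<delta> False.
        {X \<in> \<X> (fst g 0). \<forall>i\<in>{1..q}. proper_colouring (2 * n) (fst g i) (X i)})
      = card (SIGMA g:canonical_rooted q n \<delta>. \<X> (fst g 0))"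
    by (rule bij_betw_same_card, rule bij_betw_twist_rooted, erule assms(1), assumption)
  then show ?thesis
    using assms(2) finite_labelled_rooted by (simp add: card_SigmaI canonical_rooted_def)
qed

lemma cg_order_F0:
  assumes "1 \<le> q" "cg_order q (2 * n) \<sigma> = int d"
  shows "F0 q (2 * n) \<sigma> + d = 1 + (q - 1) * n"
proof -
  have "((int q - 1) * int (2 * n)) div 2 = int ((q - 1) * n)"
    using assms(1) by (simp add: of_nat_diff)
  then show ?thesis using assms(2) unfolding cg_order_def by linarith
qed

lemma perfect_matching_labelled_rooted:
  assumes "g \<in> labelled_rooted q n \<delta> bip" "c \<le> q"
  shows "perfect_matching (2 * n) (fst g c)"
  using assms colored_graphD(2) unfolding labelled_rooted_def by auto

lemma canonical_rooted_subset: "canonical_rooted q n \<delta> \<subseteq> labelled_rooted q n \<delta> False"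
  unfolding canonical_rooted_def by blast

lemma sum_pow_F0_labelled_rooted:
  "(\<Sum>g\<in>labelled_rooted q n \<delta> False. 2 ^ F0 q (2 * n) (fst g))
    = card (canonical_rooted q n \<delta>) * 2 ^ (n * q)"
proof -
  note pm = perfect_matching_labelled_rooted
  have "card {X \<in> (\<Pi>\<^sub>E i\<in>{1..q}. {Y. proper_colouring (2 * n) (fst g 0) Y}).
      \<forall>i\<in>{1..q}. proper_colouring (2 * n) (fst g i) (X i)} = 2 ^ F0 q (2 * n) (fst g)"
    if "g \<in> labelled_rooted q n \<delta> False" for g
  proof -
    have "{X \<in> (\<Pi>\<^sub>E i\<in>{1..q}. {Y. proper_colouring (2 * n) (fst g 0) Y}).
        \<forall>i\<in>{1..q}. proper_colouring (2 * n) (fst g i) (X i)}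
      = (\<Pi>\<^sub>E i\<in>{1..q}. {Y. proper_colouring (2 * n) (fst g 0) Y \<and> proper_colouring (2 * n) (fst g i) Y})"
      by (intro set_eqI) (simp add: PiE_iff ball_conj_distrib conj_ac)
    then show ?thesis
      using card_common_colourings_pair pm[OF that]
      by (simp add: card_PiE bicoloured_cycles_eq F0_def power_sum)
  qed
  moreover have "card (\<Pi>\<^sub>E i\<in>{1..q}. {Y. proper_colouring (2 * n) (fst g 0) Y}) = 2 ^ (n * q)"
    if "g \<in> canonical_rooted q n \<delta>" for g
  proof -
    have "g \<in> labelled_rooted q n \<delta> False" using that canonical_rooted_subset by blast
    then show ?thesis using card_proper_colourings[OF pm] by (simp add: card_PiE power_mult)
  qed
  moreover have "(\<Sum>g\<in>labelled_rooted q n \<delta> False.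
        card {X \<in> (\<Pi>\<^sub>E i\<in>{1..q}. {Y. proper_colouring (2 * n) (fst g 0) Y}).
          \<forall>i\<in>{1..q}. proper_colouring (2 * n) (fst g i) (X i)})
      = (\<Sum>g\<in>canonical_rooted q n \<delta>. card (\<Pi>\<^sub>E i\<in>{1..q}. {Y. proper_colouring (2 * n) (fst g 0) Y}))"
    by (rule sum_twist_pairs) (auto simp: finite_proper_colourings intro!: finite_PiE)
  ultimately show ?thesis by simp
qed

lemma card_labelled_rooted_bipartite:
  "2 * card (labelled_rooted q n \<delta> True) = card (canonical_rooted q n \<delta>) * 2 ^ n"
proof -
  note pm = perfect_matching_labelled_rooted
  have "card {X \<in> (\<lambda>Y (_ :: nat). Y) ` {Y. proper_colouring (2 * n) (fst g 0) Y}.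
      \<forall>i\<in>{1..q}. proper_colouring (2 * n) (fst g i) (X i)}
      = (if cg_bipartite q (2 * n) (fst g) then 2 else 0)"
    if "g \<in> labelled_rooted q n \<delta> False" for g
  proof -
    have "{X \<in> (\<lambda>Y (_ :: nat). Y) ` {Y. proper_colouring (2 * n) (fst g 0) Y}.
        \<forall>i\<in>{1..q}. proper_colouring (2 * n) (fst g i) (X i)}
      = (\<lambda>Y (_ :: nat). Y) ` {Y. \<forall>c\<le>q. proper_colouring (2 * n) (fst g c) Y}"
      by (auto simp: image_iff) (metis One_nat_def atLeastAtMost_iff not_less_eq_eq le0 le_zero_eq)+
    moreover have "inj (\<lambda>(Y :: nat set) (_ :: nat). Y)" by (auto intro: injI simp: fun_eq_iff)
    moreover have "colored_graph q (2 * n) (fst g)" using that unfolding labelled_rooted_def by auto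
    ultimately show ?thesis using card_bipartitions by (simp add: card_image inj_on_subset)
  qed
  moreover have "card ((\<lambda>Y (_ :: nat). Y) ` {Y. proper_colouring (2 * n) (fst g 0) Y}) = 2 ^ n"
    if "g \<in> canonical_rooted q n \<delta>" for g
  proof -
    have "g \<in> labelled_rooted q n \<delta> False" using that canonical_rooted_subset by blast
    then show ?thesis using card_proper_colourings[OF pm] by (simp add: card_image inj_on_def fun_eq_iff)
  qed
  moreover have "(\<Sum>g\<in>labelled_rooted q n \<delta> False.
        card {X \<in> (\<lambda>Y (_ :: nat). Y) ` {Y. proper_colouring (2 * n) (fst g 0) Y}.
          \<forall>i\<in>{1..q}. proper_colouring (2 * n) (fst g i) (X i)})
      = (\<Sum>g\<in>canonical_rooted q n \<delta>.
          card ((\<lambda>Y (_ :: nat). Y) ` {Y. proper_colouring (2 * n) (fst g 0) Y}))"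
    by (rule sum_twist_pairs) (auto simp: finite_proper_colourings)
  ultimately have "(\<Sum>g\<in>labelled_rooted q n \<delta> False. if cg_bipartite q (2 * n) (fst g) then 2 else 0)
      = card (canonical_rooted q n \<delta>) * 2 ^ n"
    by simp
  moreover have "labelled_rooted q n \<delta> True
      = {g \<in> labelled_rooted q n \<delta> False. cg_bipartite q (2 * n) (fst g)}"
    unfolding labelled_rooted_def by auto
  ultimately show ?thesis
    using sum.inter_filter[OF finite_labelled_rooted[of q n \<delta> False],
        where g = "\<lambda>_. 2 :: nat" and P = "\<lambda>g. cg_bipartite q (2 * n) (fst g)"]
    by (simp add: mult.commute)
qed

lemma card_labelled_rooted:
  assumes "1 \<le> q"
  shows "card (labelled_rooted q n (int d) False) = 2 ^ d * card (labelled_rooted q n (int d) True)"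
proof -
  let ?L = "labelled_rooted q n (int d) False" and ?C = "canonical_rooted q n (int d)"
  have "2 ^ F0 q (2 * n) (fst g) * 2 ^ d = (2::nat) ^ (1 + (q - 1) * n)" if "g \<in> ?L" for g
    using cg_order_F0[OF assms, of n "fst g" d] that unfolding labelled_rooted_def
    by (auto simp: power_add[symmetric])
  then have "card ?L * 2 ^ (1 + (q - 1) * n) = (\<Sum>g\<in>?L. 2 ^ F0 q (2 * n) (fst g)) * 2 ^ d"
    by (simp add: sum_distrib_right)
  also have "\<dots> = card ?C * 2 ^ (n + (q - 1) * n) * 2 ^ d"
  proof -
    have "n * q = n + (q - 1) * n" using assms by (cases q) (simp_all add: algebra_simps)
    then show ?thesis by (simp add: sum_pow_F0_labelled_rooted)
  qed
  also have "\<dots> = card ?C * 2 ^ n * 2 ^ ((q - 1) * n) * 2 ^ d" by (simp add: power_add)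
  also have "\<dots> = (2 ^ d * card (labelled_rooted q n (int d) True)) * 2 ^ (1 + (q - 1) * n)"
    using card_labelled_rooted_bipartite[of q n "int d"] by (simp add: power_add)
  finally show ?thesis by simp
qed

section \<open>Rooted isomorphism classes\<close>

definition relabel_rooted ::
    "(nat \<Rightarrow> nat) \<Rightarrow> (nat \<Rightarrow> nat \<Rightarrow> nat) \<times> nat \<Rightarrow> (nat \<Rightarrow> nat \<Rightarrow> nat) \<times> nat" where
  "relabel_rooted \<pi> g = (relabel \<pi> \<circ> fst g, \<pi> (snd g))"

lemma relabel_rooted_id: "relabel_rooted id g = g"
  unfolding relabel_rooted_def relabel_def by (simp add: comp_def)

lemma relabel_rooted_comp:
  assumes "\<pi>1 permutes S" "\<pi>2 permutes S"
  shows "relabel_rooted \<pi>2 (relabel_rooted \<pi>1 g) = relabel_rooted (\<pi>2 \<circ> \<pi>1) g"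
  unfolding relabel_rooted_def relabel_def
    o_inv_distrib[OF permutes_bij[OF assms(2)] permutes_bij[OF assms(1)]]
  by (simp add: fun_eq_iff)

lemma relabel_rooted_inv:
  assumes "\<pi> permutes S"
  shows "relabel_rooted (inv \<pi>) (relabel_rooted \<pi> g) = g"
  using relabel_rooted_comp[OF assms permutes_inv[OF assms]] permutes_inv_o(2)[OF assms]
  by (simp add: relabel_rooted_id)

lemma relabel_labelled_rooted:
  assumes "\<pi> permutes {0..<2 * n}" "g \<in> labelled_rooted q n \<delta> bip"
  shows "relabel_rooted \<pi> g \<in> labelled_rooted q n \<delta> bip"
  using assms(2) colored_graph_relabel[OF assms(1)] cg_order_relabel[OF assms(1)]
    cg_bipartite_relabel[OF assms(1)] permutes_in_image[OF assms(1)]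
  unfolding labelled_rooted_def relabel_rooted_def by auto

lemma rooted_iso_iff_relabel:
  assumes g: "g \<in> labelled_rooted q n \<delta> bip" and h: "h \<in> labelled_rooted q n \<delta> bip"
  shows "rooted_iso q (2 * n) g h \<longleftrightarrow> (\<exists>\<pi>. \<pi> permutes {0..<2 * n} \<and> h = relabel_rooted \<pi> g)"
proof
  obtain \<sigma> r \<tau> r' where gh: "g = (\<sigma>, r)" "h = (\<tau>, r')" by (cases g, cases h)
  have cg: "colored_graph q (2 * n) \<sigma>" "colored_graph q (2 * n) \<tau>" and "r < 2 * n"
    using g h unfolding gh labelled_rooted_iff by blast+
  assume "rooted_iso q (2 * n) g h"
  then obtain \<rho> where \<rho>: "bij_betw \<rho> {0..<2 * n} {0..<2 * n}" "\<rho> r = r'"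
    "\<forall>c\<le>q. \<forall>x<2 * n. \<rho> (\<sigma> c x) = \<tau> c (\<rho> x)"
    unfolding rooted_iso_def gh by auto
  define \<pi> where "\<pi> x = (if x < 2 * n then \<rho> x else x)" for x
  have "bij_betw \<pi> {0..<2 * n} {0..<2 * n}"
    using \<rho>(1) by (rule bij_betw_cong[THEN iffD1, rotated]) (simp add: \<pi>_def)
  then have perm: "\<pi> permutes {0..<2 * n}" by (rule bij_imp_permutes) (simp add: \<pi>_def)
  have "\<tau> c = relabel \<pi> (\<sigma> c)" for c
  proof (cases "c \<le> q")
    case True
    have "\<forall>x<2 * n. \<pi> (\<sigma> c x) = \<tau> c (\<pi> x)"
      using \<rho>(3) True perfect_matchingD(1)[OF colored_graphD(2)[OF cg(1) True]] unfolding \<pi>_def by simp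
    then show ?thesis
      using relabel_conjugate[OF perm] colored_graphD(2)[OF cg(1) True] colored_graphD(2)[OF cg(2) True]
      by blast
  next
    case False
    then show ?thesis using colored_graphD(3)[OF cg(1)] colored_graphD(3)[OF cg(2)] relabel_id[OF perm]
      by simp
  qed
  then have "h = relabel_rooted \<pi> g"
    using \<rho>(2) \<open>r < 2 * n\<close> unfolding gh relabel_rooted_def \<pi>_def by (simp add: fun_eq_iff)
  with perm show "\<exists>\<pi>. \<pi> permutes {0..<2 * n} \<and> h = relabel_rooted \<pi> g" by blast
next
  assume "\<exists>\<pi>. \<pi> permutes {0..<2 * n} \<and> h = relabel_rooted \<pi> g"
  then obtain \<pi> where "\<pi> permutes {0..<2 * n}" "h = relabel_rooted \<pi> g" by blast
  then show "rooted_iso q (2 * n) g h"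
    unfolding rooted_iso_def relabel_rooted_def
    by (intro exI[of _ \<pi>]) (simp add: permutes_imp_bij relabel_apply)
qed

text \<open>Rooted connected coloured graphs are rigid: a relabelling fixing the root fixes,
  along the edges, every vertex.\<close>

lemma relabel_rooted_inj:
  assumes g: "g \<in> labelled_rooted q n \<delta> bip"
    and perm: "\<pi>1 permutes {0..<2 * n}" "\<pi>2 permutes {0..<2 * n}"
    and eq: "relabel_rooted \<pi>1 g = relabel_rooted \<pi>2 g"
  shows "\<pi>1 = \<pi>2"
proof
  obtain \<sigma> r where gs: "g = (\<sigma>, r)" by (cases g)
  have cg: "colored_graph q (2 * n) \<sigma>" and "r < 2 * n"
    using g unfolding gs labelled_rooted_iff by blast+
  have graphs: "relabel \<pi>1 \<circ> \<sigma> = relabel \<pi>2 \<circ> \<sigma>" and root: "\<pi>1 r = \<pi>2 r"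
    using eq unfolding gs relabel_rooted_def by simp_all
  have along_edge: "\<pi>1 b = \<pi>2 b" if "(a, b) \<in> cg_edges q (2 * n) \<sigma>" "\<pi>1 a = \<pi>2 a" for a b
  proof -
    have "\<exists>c. c \<le> q \<and> b = \<sigma> c a" using that(1) unfolding cg_edges_def by auto
    then obtain c where c: "c \<le> q" "b = \<sigma> c a" by blast
    have same: "relabel \<pi>1 (\<sigma> c) = relabel \<pi>2 (\<sigma> c)"
      using fun_cong[OF graphs, of c] by (simp only: comp_apply)
    have "\<pi>1 b = relabel \<pi>1 (\<sigma> c) (\<pi>1 a)" unfolding c(2) relabel_apply[OF perm(1)] ..
    also have "\<dots> = relabel \<pi>2 (\<sigma> c) (\<pi>2 a)" unfolding same that(2) ..
    also have "\<dots> = \<pi>2 b" unfolding c(2) relabel_apply[OF perm(2)] ..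
    finally show ?thesis .
  qed
  fix x show "\<pi>1 x = \<pi>2 x"
  proof (cases "x < 2 * n")
    case True
    then have "(r, x) \<in> (cg_edges q (2 * n) \<sigma>)\<^sup>*"
      using colored_graphD(4)[OF cg] \<open>r < 2 * n\<close> unfolding cg_connected_def by blast
    then show ?thesis
    proof induction
      case base
      show ?case by (rule root)
    next
      case (step y z)
      show ?case using along_edge[OF step.hyps(2) step.IH] .
    qed
  qed (simp add: permutes_not_in[OF perm(1)] permutes_not_in[OF perm(2)])
qed

definition rooted_iso_rel ::
    "nat \<Rightarrow> nat \<Rightarrow> int \<Rightarrow> bool \<Rightarrow> (((nat \<Rightarrow> nat \<Rightarrow> nat) \<times> nat) \<times> ((nat \<Rightarrow> nat \<Rightarrow> nat) \<times> nat)) set" where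
  "rooted_iso_rel q n \<delta> bip =
    {(g, h). g \<in> labelled_rooted q n \<delta> bip \<and> h \<in> labelled_rooted q n \<delta> bip \<and> rooted_iso q (2 * n) g h}"

lemma iso_classes_eq: "iso_classes q n \<delta> bip = labelled_rooted q n \<delta> bip // rooted_iso_rel q n \<delta> bip"
  unfolding iso_classes_def rooted_iso_rel_def ..

lemma equiv_rooted_iso:
  "equiv (labelled_rooted q n \<delta> bip) (rooted_iso_rel q n \<delta> bip)"
    (is "equiv ?L ?R")
proof (rule equivI)
  have R_iff: "(g, h) \<in> ?R \<longleftrightarrow> g \<in> ?L \<and> h \<in> ?L \<and> rooted_iso q (2 * n) g h" for g h
    unfolding rooted_iso_rel_def by simp
  have relabelled: "\<exists>\<pi>. \<pi> permutes {0..<2 * n} \<and> h = relabel_rooted \<pi> g" if "(g, h) \<in> ?R" for g h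
    using that rooted_iso_iff_relabel[of g q n \<delta> bip h] unfolding R_iff by blast
  have in_R: "(g, relabel_rooted \<pi> g) \<in> ?R" if "g \<in> ?L" "\<pi> permutes {0..<2 * n}" for g \<pi>
    using that relabel_labelled_rooted[OF that(2,1)] rooted_iso_iff_relabel[OF that(1)] unfolding R_iff by blast
  show "?R \<subseteq> ?L \<times> ?L" unfolding rooted_iso_rel_def by blast
  show "refl_on ?L ?R"
  proof (rule refl_onI)
    fix g assume "g \<in> ?L"
    then show "(g, g) \<in> ?R" using in_R[of g id] by (simp add: permutes_id relabel_rooted_id)
  qed
  show "sym ?R"
  proof (rule symI)
    fix g h assume gh: "(g, h) \<in> ?R"
    then obtain \<pi> where \<pi>: "\<pi> permutes {0..<2 * n}" "h = relabel_rooted \<pi> g" using relabelled by blast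
    have "h \<in> ?L" using gh unfolding R_iff by blast
    then have "(h, relabel_rooted (inv \<pi>) h) \<in> ?R" using in_R permutes_inv[OF \<pi>(1)] by blast
    then show "(h, g) \<in> ?R" unfolding \<pi>(2) relabel_rooted_inv[OF \<pi>(1)] .
  qed
  show "trans ?R"
  proof (rule transI)
    fix g h k assume gh: "(g, h) \<in> ?R" and hk: "(h, k) \<in> ?R"
    obtain \<pi>1 where \<pi>1: "\<pi>1 permutes {0..<2 * n}" "h = relabel_rooted \<pi>1 g"
      using relabelled[OF gh] by blast
    obtain \<pi>2 where \<pi>2: "\<pi>2 permutes {0..<2 * n}" "k = relabel_rooted \<pi>2 h"
      using relabelled[OF hk] by blast
    have "g \<in> ?L" using gh unfolding R_iff by blast
    then have "(g, relabel_rooted (\<pi>2 \<circ> \<pi>1) g) \<in> ?R" using in_R permutes_compose[OF \<pi>1(1) \<pi>2(1)] by blast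
    then show "(g, k) \<in> ?R" unfolding \<pi>2(2) \<pi>1(2) relabel_rooted_comp[OF \<pi>1(1) \<pi>2(1)] .
  qed
qed

lemma card_rooted_iso_class:
  assumes g: "g \<in> labelled_rooted q n \<delta> bip"
  shows "card (rooted_iso_rel q n \<delta> bip `` {g}) = fact (2 * n)"
proof -
  have "rooted_iso_rel q n \<delta> bip `` {g} = (\<lambda>\<pi>. relabel_rooted \<pi> g) ` {\<pi>. \<pi> permutes {0..<2 * n}}"
  proof (intro equalityI subsetI)
    fix h assume "h \<in> rooted_iso_rel q n \<delta> bip `` {g}"
    then have "h \<in> labelled_rooted q n \<delta> bip" "rooted_iso q (2 * n) g h"
      unfolding rooted_iso_rel_def by auto
    then show "h \<in> (\<lambda>\<pi>. relabel_rooted \<pi> g) ` {\<pi>. \<pi> permutes {0..<2 * n}}"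
      using rooted_iso_iff_relabel[OF g] by blast
  next
    fix h assume "h \<in> (\<lambda>\<pi>. relabel_rooted \<pi> g) ` {\<pi>. \<pi> permutes {0..<2 * n}}"
    then obtain \<pi> where "\<pi> permutes {0..<2 * n}" "h = relabel_rooted \<pi> g" by blast
    moreover have "h \<in> labelled_rooted q n \<delta> bip"
      using relabel_labelled_rooted[OF _ g] calculation by blast
    ultimately show "h \<in> rooted_iso_rel q n \<delta> bip `` {g}"
      using rooted_iso_iff_relabel[OF g] g unfolding rooted_iso_rel_def by blast
  qed
  moreover have "inj_on (\<lambda>\<pi>. relabel_rooted \<pi> g) {\<pi>. \<pi> permutes {0..<2 * n}}"
    using relabel_rooted_inj[OF g] by (auto intro: inj_onI)
  ultimately show ?thesis by (simp add: card_image card_permutations)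
qed

lemma card_labelled_rooted_iso_classes:
  "card (labelled_rooted q n \<delta> bip) = fact (2 * n) * card (iso_classes q n \<delta> bip)"
proof -
  let ?L = "labelled_rooted q n \<delta> bip" and ?R = "rooted_iso_rel q n \<delta> bip"
  have "fact (2 * n) * card (?L // ?R) = card (\<Union>(?L // ?R))"
  proof (rule card_partition)
    show "finite (?L // ?R)"
      using finite_quotient[OF finite_labelled_rooted] equiv_rooted_iso by (simp add: equiv_type)
    show "finite (\<Union>(?L // ?R))"
      unfolding Union_quotient[OF equiv_rooted_iso] by (rule finite_labelled_rooted)
    show "card C = fact (2 * n)" if "C \<in> ?L // ?R" for C
      using that card_rooted_iso_class by (auto elim: quotientE)
    show "C1 \<inter> C2 = {}" if "C1 \<in> ?L // ?R" "C2 \<in> ?L // ?R" "C1 \<noteq> C2" for C1 C2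
      using quotient_disj[OF equiv_rooted_iso that(1,2)] that(3) by blast
  qed
  then show ?thesis
    unfolding Union_quotient[OF equiv_rooted_iso] iso_classes_eq by simp
qed

theorem mainTheorem2:
  fixes q n \<delta> :: nat
  assumes "2 \<le> q" and "1 \<le> n"
  shows "num_rooted q n (int \<delta>) = 2 ^ \<delta> * num_bipartite q n (int \<delta>)"
proof -
  have "fact (2 * n) * num_rooted q n (int \<delta>) = card (labelled_rooted q n (int \<delta>) False)"
    unfolding num_rooted_def card_labelled_rooted_iso_classes ..
  also have "\<dots> = 2 ^ \<delta> * card (labelled_rooted q n (int \<delta>) True)"
    using card_labelled_rooted assms(1) by simp
  also have "\<dots> = fact (2 * n) * (2 ^ \<delta> * num_bipartite q n (int \<delta>))"
    unfolding num_bipartite_def card_labelled_rooted_iso_classes by simp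
  finally show ?thesis by simp
qed

end
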